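(* Let $c\ge\lceil(2n-1)/3\rceil$ and let $\mathbf{s}_n\in\mathcal{B}(n,c,d_1)$ with $d_1=n-c$ and $add(\mathbf{s}_n)=t_1$. If there exists an integer $0<b<n$ such that $R^b(\mathbf{s}_n)\in\mathcal{B}(n,c,d_2)$ and $add(R^b(\mathbf{s}_n))=t_2\ge t_1$, then $b=d_2$.
   Context: All sequences are binary (entries in $\mathbb{Z}_2$), $\overline{x}=x\oplus1$, $x\bmod d$ is the least nonnegative residue, and $\mathbf{a}^q$ is the concatenation of $q$ copies of $\mathbf a$. For $\mathbf{s}_n=(s_0,\dots,s_{n-1})$, $\mathbf{s}_j=(s_0,\dots,s_{j-1})$. A length-$m$ sequence is periodic if it is the concatenation of $m/e$ copies of a length-$e$ sequence for a proper divisor $e$ of $m$, aperiodic otherwise. Right circular shift: $R^k(\mathbf{s}_n)=(s_{n-k},\dots,s_{n-1},s_0,\dots,s_{n-k-1})$. For $c\ge\lfloor n/2\rfloor$ and $1\le d\le\min\{n-c,\lfloor n/2\rfloor\}$, $\mathcal{B}(n,c,d)$ is the set of aperiodic length-$n$ sequences $\mathbf{s}_n$ with $\mathbf{s}_d$ aperiodic and $\mathbf{s}_{c+d}=(s_0,\dots,s_{d-1})^q(s_0,\dots,s_{r-1},\overline{s_r})$, where $q=\lfloor(c+d-1)/d\rfloor$, $r=c+d-1-qd$, and $s_{c+d},\dots,s_{n-1}$ are arbitrary. For $\mathbf{s}_n\in\mathcal{B}(n,c,d)$, $add(\mathbf{s}_n)$ is the integer $t\ge0$ such that $s_{n-1-i}=s_{(d-1-i)\bmod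 d}$ for $0\le i<t$ and $s_{n-1-t}\neq s_{(d-1-t)\bmod d}$. *)

theory Defs
  imports Complex_Main
begin

text \<open>Binary sequences are modelled as bool lists (True = 1, False = 0; complement = Not).
  Index i of the list is the entry s_i.\<close>

definition periodic :: "bool list \<Rightarrow> bool" where
  "periodic xs \<longleftrightarrow> (\<exists>e. 0 < e \<and> e < length xs \<and> e dvd length xs \<and>
       xs = concat (replicate (length xs div e) (take e xs)))"

definition aperiodic :: "bool list \<Rightarrow> bool" where
  "aperiodic xs \<longleftrightarrow> \<not> periodic xs"

text \<open>The set B(n,c,d); it is only defined for c \<ge> floor(n/2), 1 \<le> d \<le> min(n-c, floor(n/2)),
  so these parameter constraints are part of membership.\<close>
definition B_set :: "nat \<Rightarrow> nat \<Rightarrow> nat \<Rightarrow> bool list set" where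
  "B_set n c d = {s. n div 2 \<le> c \<and> 1 \<le> d \<and> d \<le> min (n - c) (n div 2) \<and>
      length s = n \<and> aperiodic s \<and> aperiodic (take d s) \<and>
      take (c + d) s = concat (replicate ((c + d - 1) div d) (take d s)) @
        take (c + d - 1 - ((c + d - 1) div d) * d) s @
        [\<not> s ! (c + d - 1 - ((c + d - 1) div d) * d)]}"

definition is_add :: "nat \<Rightarrow> nat \<Rightarrow> bool list \<Rightarrow> nat \<Rightarrow> bool" where
  "is_add n d s t \<longleftrightarrow> t < n \<and>
     (\<forall>i<t. s ! (n - 1 - i) = s ! nat ((int d - 1 - int i) mod int d)) \<and>
     s ! (n - 1 - t) \<noteq> s ! nat ((int d - 1 - int t) mod int d)"

definition rshift :: "nat \<Rightarrow> bool list \<Rightarrow> bool list" where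
  "rshift k s = drop (length s - k) s @ take (length s - k) s"

end

theory Submission
  imports Defs
begin

(* Let S be the cyclic extension of s and a = n - b, so that R^b(s) is the window of S
   starting at a. Membership in B(n,c,D), D = n - c, says that S is D-periodic on [0, n-1)
   and breaks at n-1; membership of the rotation in B(n,c,p) says that the window is
   p-periodic on its first c+p-1 letters and breaks at letter c+p-1. Since c >= (2n-1)/3,
   i.e. 2D <= c+1, the window is long compared to D, and comparing the two breaks leaves only
   a + p = n. If the window breaks before S does, one D-shift carries the window's break onto
   letters where it holds. If both breaks coincide, Fine and Wilf give the window, hence the
   aperiodic prefix of length D, the period gcd(p, D), which is < D unless p = D. If S breaks
   inside the window, reading the window's period p around the cycle either contradicts the
   break of S directly, or turns the period into invariance under r -> r + c (mod p), whose
   orbit connects the window's break to a letter it must equal. *)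

definition has_period :: "(nat \<Rightarrow> 'a) \<Rightarrow> nat \<Rightarrow> nat \<Rightarrow> bool" where
  "has_period F L p \<longleftrightarrow> (\<forall>k. k + p < L \<longrightarrow> F k = F (k + p))"

lemma has_period_cong:
  "(\<And>i. i < L \<Longrightarrow> F i = G i) \<Longrightarrow> has_period F L p \<longleftrightarrow> has_period G L p"
  unfolding has_period_def by auto

lemma has_period_mono: "has_period F L p \<Longrightarrow> L' \<le> L \<Longrightarrow> has_period F L' p"
  unfolding has_period_def by auto

lemma has_period_mod:
  assumes "has_period F L p" "0 < p" "k < L"
  shows "F k = F (k mod p)"
  using assms(3)
proof (induction k rule: less_induct)
  case (less k)
  show ?case
  proof (cases "k < p")
    case False
    then have "F (k - p) = F k"
      using assms(1) less.prems unfolding has_period_def by (metis le_add_diff_inverse2 not_less)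
    moreover have "F (k - p) = F ((k - p) mod p)"
      using less assms(2) False by simp
    ultimately show ?thesis
      using False by (simp add: mod_if)
  qed simp
qed

lemma has_period_diff:
  assumes "has_period F L p" "has_period F L q" "p < q"
  shows "has_period F (L - p) (q - p)"
  unfolding has_period_def
proof (intro allI impI)
  fix k
  assume "k + (q - p) < L - p"
  then have "F k = F (k + q)" and "F (k + (q - p)) = F (k + (q - p) + p)"
    using assms unfolding has_period_def by auto
  then show "F k = F (k + (q - p))"
    using assms(3) by simp
qed

text \<open>Every position is congruent mod \<open>p\<close> to one below \<open>p \<le> L - p\<close>.\<close>
lemma has_period_extend:
  assumes "has_period F L p" "has_period F (L - p) g" "0 < g" "g dvd p" "0 < p" "2 * p \<le> L"
  shows "has_period F L g"
proof -
  have mod_g: "F k = F (k mod g)" if "k < L" for k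
  proof -
    have "F k = F (k mod p)"
      using has_period_mod[OF assms(1) assms(5) that] .
    also have "\<dots> = F (k mod p mod g)"
    proof -
      have "k mod p < p"
        using assms(5) by simp
      then have "k mod p < L - p"
        using assms(6) by linarith
      then show ?thesis
        using has_period_mod[OF assms(2) assms(3)] by blast
    qed
    also have "k mod p mod g = k mod g"
      using mod_mod_cancel[OF assms(4)] .
    finally show ?thesis .
  qed
  show ?thesis
    unfolding has_period_def
  proof (intro allI impI)
    fix k
    assume "k + g < L"
    then show "F k = F (k + g)"
      using mod_g[of k] mod_g[of "k + g"] by simp
  qed
qed

theorem fine_wilf:
  assumes "has_period F L p" "has_period F L q" "0 < p" "0 < q" "p + q \<le> L + gcd p q"
  shows "has_period F L (gcd p q)"
  using assms
proof (induction "p + q" arbitrary: p q L rule: less_induct)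
  case less
  have reduce: "has_period F L (gcd x y)"
    if "x < y" "x + y = p + q" "0 < x" "x + y \<le> L + gcd x y"
      and periods: "has_period F L x" "has_period F L y" for x y
  proof -
    have gcd_eq: "gcd x (y - x) = gcd x y"
      using gcd_diff1_nat[of x y] \<open>x < y\<close> by (simp add: gcd.commute)
    have "gcd x y \<le> y - x"
      using gcd_le2_nat[of "y - x" x] gcd_eq \<open>x < y\<close> by simp
    then have short: "2 * x \<le> L"
      using \<open>x + y \<le> L + gcd x y\<close> \<open>x < y\<close> by linarith
    have "has_period F (L - x) (gcd x (y - x))"
    proof (rule less.hyps)
      show "x + (y - x) < p + q"
        using that less.prems(3) by simp
      show "has_period F (L - x) x"
        using has_period_mono[OF periods(1)] by simp
      show "has_period F (L - x) (y - x)"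
        using has_period_diff[OF periods \<open>x < y\<close>] .
      show "x + (y - x) \<le> L - x + gcd x (y - x)"
        using \<open>x + y \<le> L + gcd x y\<close> gcd_eq short by simp
    qed (use that in auto)
    then show ?thesis
      using has_period_extend[OF periods(1)] gcd_eq \<open>0 < x\<close> short by simp
  qed
  consider "p = q" | "p < q" | "q < p"
    by linarith
  then show ?case
  proof cases
    case 1
    then show ?thesis
      using less.prems(1) by simp
  next
    case 2
    then show ?thesis
      using reduce less.prems by simp
  next
    case 3
    then show ?thesis
      using reduce[of q p] less.prems by (simp add: gcd.commute add.commute)
  qed
qed

lemma invariant_along_mod_orbit:
  fixes f :: "nat \<Rightarrow> 'a"
  assumes "0 < p" and invariant: "\<And>r. r < p - 1 \<Longrightarrow> f r = f ((r + c) mod p)"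
  shows "f ((c + p - 1) mod p) = f (p - 1)"
proof (rule ccontr)
  \<comment> \<open>\<open>r\<close> runs through the orbit of \<open>(c - 1) mod p\<close>; it reaches \<open>p - 1\<close>
    at \<open>k = p\<close> at the latest.\<close>
  define r where "r k = (k * c + p - 1) mod p" for k
  assume differ: "f ((c + p - 1) mod p) \<noteq> f (p - 1)"
  have orbit: "f (r k) = f (r 1)" if "1 \<le> k" for k
    using that
  proof (induction k rule: dec_induct)
    case (step k)
    have "r k \<noteq> p - 1"
      using step.IH differ unfolding r_def by auto
    moreover have "r k < p"
      unfolding r_def using assms(1) by simp
    ultimately have "f (r k) = f ((r k + c) mod p)"
      using invariant by simp
    also have "(r k + c) mod p = r (Suc k)"
    proof -
      have "Suc k * c + p - 1 = (k * c + p - 1) + c"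
        using assms(1) by simp
      then show ?thesis
        unfolding r_def by (simp add: mod_add_left_eq)
    qed
    finally show ?case
      using step.IH by simp
  qed simp
  have last: "r p = p - 1"
  proof -
    have "p * c + p - 1 = (p - 1) + c * p"
      using assms(1) by (simp add: mult.commute)
    then have "r p = ((p - 1) + c * p) mod p"
      unfolding r_def by (simp only:)
    also have "\<dots> = (p - 1) mod p"
      by (rule mod_mult_self1)
    finally show ?thesis
      using assms(1) by simp
  qed
  have "r 1 = (c + p - 1) mod p"
    unfolding r_def by simp
  then show False
    using orbit[of p] last differ assms(1) by simp
qed

text \<open>\<open>S\<close> is the cyclic extension of \<open>s \<in> B(n, c, D)\<close>, and the window \<open>j \<mapsto> S (a + j)\<close>
  is the right rotation of \<open>s\<close> by \<open>n - a\<close>, assumed to lie in \<open>B(n, c, p)\<close>.\<close>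

locale rotated_window =
  fixes S :: "nat \<Rightarrow> 'a" and n c D p a :: nat
  assumes cyclic: "\<And>i. S (i + n) = S i"
    and n_eq: "n = c + D"
    and D_less_c: "D < c"
    and D_bound: "2 * D \<le> c + 1"
    and p_pos: "0 < p" and p_le_D: "p \<le> D"
    and a_pos: "0 < a" and a_less_n: "a < n"
    and base_period: "has_period S (n - 1) D"
    and base_break: "S (n - 1) \<noteq> S (n - 1 - D)"
    and window_period: "has_period (\<lambda>j. S (a + j)) (c + p - 1) p"
    and window_break: "S (a + c + p - 1) \<noteq> S (a + c - 1)"
    and base_primitive: "\<And>g. 0 < g \<Longrightarrow> g dvd D \<Longrightarrow> has_period S D g \<Longrightarrow> g = D"
begin

lemma S_add_D: "x + D < n - 1 \<Longrightarrow> S x = S (x + D)"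
  using base_period unfolding has_period_def by blast

lemma S_add_p:
  assumes "a \<le> x" "x + 1 < a + c"
  shows "S x = S (x + p)"
proof -
  have "x - a + p < c + p - 1"
    using assms by linarith
  then have "S (a + (x - a)) = S (a + (x - a + p))"
    using window_period unfolding has_period_def by blast
  then show ?thesis
    using assms(1) by (simp add: add.assoc[symmetric])
qed

lemma a_plus_p_not_less_D: "\<not> a + p < D"
proof
  assume "a + p < D"
  define i where "i = a + c - 1 - D"
  have i: "a \<le> i" "i + 1 < a + c" "i + D = a + c - 1" "i + p + D = a + c + p - 1"
    using D_less_c p_pos p_le_D i_def by linarith+
  have "S (a + c - 1) = S (a + c + p - 1)"
    using S_add_D[of i] S_add_p[of i] S_add_D[of "i + p"] i \<open>a + p < D\<close> n_eq by simp
  with window_break show False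
    by simp
qed

lemma a_plus_p_neq_D: "a + p \<noteq> D"
proof
  assume aligned: "a + p = D"
  define W where "W j = S (a + j)" for j
  define g where "g = gcd p D"
  have "has_period W (c + p - 1) D"
    unfolding has_period_def W_def using S_add_D aligned n_eq by (simp add: add.assoc)
  then have W_period: "has_period W (c + p - 1) g"
    unfolding g_def using fine_wilf[OF window_period[folded W_def]] p_pos p_le_D D_less_c by simp
  have "has_period S D g"
    unfolding has_period_def
  proof (intro allI impI)
    fix k
    assume "k + g < D"
    have shift: "a + (k + p) = k + D" "a + (k + g + p) = k + g + D"
      using aligned by simp_all
    have "S k = W (k + p)"
      unfolding W_def shift using S_add_D[of k] \<open>k + g < D\<close> D_less_c n_eq by simp
    also have "\<dots> = W (k + g + p)"
      using W_period \<open>k + g < D\<close> D_less_c unfolding has_period_def by (simp add: ac_simps)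
    also have "\<dots> = S (k + g)"
      unfolding W_def shift using S_add_D[of "k + g"] \<open>k + g < D\<close> D_less_c n_eq by simp
    finally show "S k = S (k + g)" .
  qed
  then have "g = D"
    using base_primitive p_pos unfolding g_def by simp
  then have "D dvd p"
    using gcd_dvd1[of p D] unfolding g_def by simp
  then have "D \<le> p"
    using p_pos by (rule dvd_imp_le)
  with p_le_D have "p = D"
    by simp
  then show False
    using aligned a_pos by simp
qed

lemma a_plus_p_le_n: "a + p \<le> n"
proof (rule ccontr)
  assume "\<not> a + p \<le> n"
  define l where "l = a - D - 1"
  have l: "a + c + p - 1 = (l + p) + n" "a + c - 1 = l + n" "l + D < n - 1" "l + p < n - 1"
    using \<open>\<not> a + p \<le> n\<close> a_less_n p_le_D D_less_c n_eq l_def by linarith+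
  have "S l = S (l + p)"
  proof (cases "p = D")
    case True
    then show ?thesis
      using S_add_D[of l] l by simp
  next
    case False
    define k where "k = l - D"
    have k: "k + D = l" "a \<le> k + n" "k + n + 1 < a + c" "k + p + D = l + p"
      using \<open>\<not> a + p \<le> n\<close> False p_pos p_le_D D_less_c D_bound n_eq l_def k_def
      by linarith+
    have "S l = S k"
      using S_add_D[of k] k l by simp
    also have "\<dots> = S (k + p)"
      using S_add_p[of "k + n"] k cyclic[of k] cyclic[of "k + p"] by (simp add: ac_simps)
    also have "\<dots> = S (l + p)"
      using S_add_D[of "k + p"] k l by simp
    finally show ?thesis .
  qed
  moreover have "S (a + c + p - 1) = S (l + p)" "S (a + c - 1) = S l"
    unfolding l(1,2) cyclic by (rule refl)+
  ultimately show False
    using window_break by simp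
qed

lemma a_less_D_if_a_plus_p_less_n:
  assumes "a + p < n"
  shows "a < D"
proof (rule ccontr)
  assume "\<not> a < D"
  define W where "W j = S (a + j)" for j
  have W_mod: "W j = W (j mod p)" if "j < c + p - 1" for j
    using has_period_mod[OF window_period[folded W_def] p_pos that] .
  have W_orbit: "W r = W ((r + c) mod p)" if "r < p - 1" for r
  proof -
    define i where "i = a + r - D"
    have i: "i + D = a + r" "i + D < n - 1" "i + n = a + (r + c)"
      using \<open>\<not> a < D\<close> assms that n_eq i_def by linarith+
    have "W r = S i"
      unfolding W_def i(1)[symmetric] using S_add_D[of i] i(2) by simp
    also have "\<dots> = W (r + c)"
      unfolding W_def i(3)[symmetric] cyclic ..
    also have "\<dots> = W ((r + c) mod p)"
      using W_mod that by simp
    finally show ?thesis .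
  qed
  have "W (c - 1) = W ((c - 1) mod p)"
    using W_mod[of "c - 1"] D_less_c p_pos by simp
  also have "(c - 1) mod p = (c + p - 1) mod p"
  proof -
    have "c + p - 1 = (c - 1) + p"
      using D_less_c by simp
    then show ?thesis
      by (simp only: mod_add_self2)
  qed
  also have "W \<dots> = W (p - 1)"
    using invariant_along_mod_orbit[of p W c, OF p_pos W_orbit] .
  also have "\<dots> = S (a + c + p - 1)"
  proof -
    define j where "j = a + p - 1 - D"
    have j: "j + D = a + (p - 1)" "j + D < n - 1" "j + n = a + c + p - 1"
      using \<open>\<not> a < D\<close> assms p_pos n_eq j_def by linarith+
    show ?thesis
      unfolding W_def j(1,3)[symmetric] cyclic using S_add_D[of j] j(2) by simp
  qed
  finally show False
    using window_break D_less_c unfolding W_def by simp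
qed

lemma a_plus_p_le_D_if_a_less_D:
  assumes "a < D"
  shows "a + p \<le> D"
proof (rule ccontr)
  assume "\<not> a + p \<le> D"
  define i where "i = n - 1 - p"
  have i: "a \<le> i" "i + 1 < a + c" "i + p = n - 1"
    using assms \<open>\<not> a + p \<le> D\<close> p_le_D D_less_c n_eq i_def by linarith+
  have "S i = S (n - 1)"
    using S_add_p[of i] i by simp
  moreover have "S i = S (n - 1 - D)"
  proof (cases "p = D")
    case False
    define k where "k = i - D"
    have k: "k + D = i" "k + D < n - 1" "a \<le> k" "k + 1 < a + c" "k + p = n - 1 - D"
      using assms False p_pos p_le_D D_less_c D_bound n_eq i_def k_def by linarith+
    have "S i = S k"
      using S_add_D[of k] k by simp
    also have "\<dots> = S (n - 1 - D)"
      using S_add_p[of k] k by simp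
    finally show ?thesis .
  qed (simp add: i_def)
  ultimately show False
    using base_break by simp
qed

theorem a_plus_p_eq_n: "a + p = n"
proof (rule ccontr)
  assume "a + p \<noteq> n"
  then have "a + p \<le> D"
    using a_plus_p_le_n a_less_D_if_a_plus_p_less_n a_plus_p_le_D_if_a_less_D by simp
  then show False
    using a_plus_p_not_less_D a_plus_p_neq_D by simp
qed

end

lemma nth_concat_replicate_append_take:
  "r \<le> length ys \<Longrightarrow> i < q * length ys + r \<Longrightarrow>
    (concat (replicate q ys) @ take r ys) ! i = ys ! (i mod length ys)"
proof (induction q arbitrary: i)
  case (Suc q)
  then show ?case
    by (cases "i < length ys") (auto simp: nth_append le_mod_geq)
qed simp

lemma B_setD:
  assumes "s \<in> B_set n c d"
  shows "length s = n" "1 \<le> d" "d \<le> c" "c + d \<le> n" "d \<le> n div 2" "aperiodic (take d s)"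
    and "take (c + d) s = (concat (replicate ((c + d - 1) div d) (take d s))
      @ take ((c + d - 1) mod d) (take d s)) @ [\<not> s ! ((c + d - 1) mod d)]"
proof -
  note B = assms[unfolded B_set_def mem_Collect_eq]
  have bounds: "n div 2 \<le> c" "1 \<le> d" "d \<le> n - c" "d \<le> n div 2" "length s = n"
    using B by simp_all
  then show "length s = n" "1 \<le> d" "d \<le> c" "c + d \<le> n" "d \<le> n div 2"
    by linarith+
  show "aperiodic (take d s)"
    using B by simp
  define q where "q = (c + d - 1) div d"
  define r where "r = (c + d - 1) mod d"
  have "c + d - 1 - q * d = r"
    unfolding q_def r_def by (simp add: minus_div_mult_eq_mod)
  then have "take (c + d) s = concat (replicate q (take d s)) @ take r s @ [\<not> s ! r]"
    using B unfolding q_def by simp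
  moreover have "r < d"
    using bounds(2) unfolding r_def by simp
  ultimately show "take (c + d) s = (concat (replicate ((c + d - 1) div d) (take d s))
      @ take ((c + d - 1) mod d) (take d s)) @ [\<not> s ! ((c + d - 1) mod d)]"
    unfolding q_def[symmetric] r_def[symmetric] by simp
qed

lemma B_set_nth_mod:
  assumes "s \<in> B_set n c d" "i < c + d - 1"
  shows "s ! i = s ! (i mod d)"
proof -
  define x where "x = take d s"
  define r where "r = (c + d - 1) mod d"
  note B = B_setD[OF assms(1), folded x_def r_def]
  have len_x: "length x = d" and "r < d"
    using B(1-4) unfolding x_def r_def by simp_all
  have len: "length (concat (replicate ((c + d - 1) div d) x) @ take r x) = c + d - 1"
    using len_x \<open>r < d\<close> unfolding r_def by (simp add: length_concat sum_list_replicate)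
  have "s ! i = take (c + d) s ! i"
    using assms(2) by simp
  also have "\<dots> = (concat (replicate ((c + d - 1) div d) x) @ take r x) ! i"
    unfolding B(7) by (rule nth_append_left) (use assms(2) len in simp)
  also have "\<dots> = x ! (i mod d)"
    using nth_concat_replicate_append_take[of r x i] assms(2) \<open>r < d\<close> len_x
    unfolding r_def by simp
  also have "\<dots> = s ! (i mod d)"
    using B(2) unfolding x_def by simp
  finally show ?thesis .
qed

lemma B_set_has_period:
  assumes "s \<in> B_set n c d"
  shows "has_period (nth s) (c + d - 1) d"
  unfolding has_period_def
proof (intro allI impI)
  fix k
  assume "k + d < c + d - 1"
  then show "s ! k = s ! (k + d)"
    using B_set_nth_mod[OF assms, of k] B_set_nth_mod[OF assms, of "k + d"] by simp
qed

lemma B_set_nth_break: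
  assumes "s \<in> B_set n c d"
  shows "s ! (c + d - 1) \<noteq> s ! (c - 1)"
proof -
  define r where "r = (c + d - 1) mod d"
  define P where "P = concat (replicate ((c + d - 1) div d) (take d s)) @ take r (take d s)"
  note B = B_setD[OF assms, folded r_def]
  have prefix: "take (c + d) s = P @ [\<not> s ! r]"
    unfolding P_def by (rule B(7))
  have "r < d" "length (take d s) = d" "(c + d - 1) div d * d + r = c + d - 1"
    using B(1,2,4) unfolding r_def by simp_all
  then have len: "length P = c + d - 1"
    unfolding P_def by (simp add: length_concat sum_list_replicate)
  have "s ! (c + d - 1) = (P @ [\<not> s ! r]) ! length P"
    unfolding prefix[symmetric] len using B(2) by simp
  also have "\<dots> = (\<not> s ! r)"
    by (rule nth_append_length)
  also have "r = (c - 1) mod d"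
  proof -
    have "c + d - 1 = (c - 1) + d"
      using B(2,3) by simp
    then show ?thesis
      unfolding r_def by (simp only: mod_add_self2)
  qed
  also have "s ! ((c - 1) mod d) = s ! (c - 1)"
    using B_set_nth_mod[OF assms, of "c - 1"] B(2,3) by simp
  finally show ?thesis
    by simp
qed

lemma aperiodic_take_dvd_period_eq:
  assumes "aperiodic (take D s)" "0 < D" "D \<le> length s" "0 < g" "g dvd D" "has_period (nth s) D g"
  shows "g = D"
proof (rule ccontr)
  assume "g \<noteq> D"
  have "g < D"
    using dvd_imp_le[OF assms(5,2)] \<open>g \<noteq> D\<close> by simp
  have len: "length (take D s) = D"
    using assms(3) by simp
  have "take D s = concat (replicate (D div g) (take g (take D s)))"
  proof (rule nth_equalityI)
    show "length (take D s) = length (concat (replicate (D div g) (take g (take D s))))"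
      using assms(3,5) \<open>g < D\<close> by (simp add: length_concat sum_list_replicate)
  next
    fix i
    assume "i < length (take D s)"
    then have "i < D"
      using assms(3) by simp
    have "take D s ! i = s ! (i mod g)"
      using has_period_mod[OF assms(6,4) \<open>i < D\<close>] \<open>i < D\<close> by simp
    also have "\<dots> = (concat (replicate (D div g) (take g (take D s))) @ take 0 []) ! i"
      using nth_concat_replicate_append_take[of 0 "take g (take D s)" i "D div g"]
        \<open>i < D\<close> \<open>g < D\<close> assms(3-5) by simp
    finally show "take D s ! i = concat (replicate (D div g) (take g (take D s))) ! i"
      by simp
  qed
  then have "periodic (take D s)"
    unfolding periodic_def len using assms(4,5) \<open>g < D\<close> by blast
  then show False
    using assms(1) unfolding aperiodic_def by simp
qed

lemma nth_rshift:
  assumes "length s = n" "b \<le> n" "j < n"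
  shows "rshift b s ! j = s ! ((n - b + j) mod n)"
proof (cases "j < b")
  case True
  then show ?thesis
    using assms unfolding rshift_def by (simp add: nth_append)
next
  case False
  then have "n - b + j = (j - b) + n"
    using assms(2) by simp
  then have "(n - b + j) mod n = j - b"
    using assms(3) by (simp only: mod_add_self2) simp
  then show ?thesis
    using False assms unfolding rshift_def by (simp add: nth_append)
qed

lemma rshift_in_B_set_eq:
  assumes s: "s \<in> B_set n c D" and u: "rshift b s \<in> B_set n c p"
    and n_eq: "n = c + D" and "D < c" "2 * D \<le> c + 1" "0 < b" "b < n"
  shows "b = p"
proof -
  define S where "S i = s ! (i mod n)" for i
  note s_facts = B_setD[OF s] and u_facts = B_setD[OF u]
  have S_nth: "S i = s ! i" if "i < n" for i
    using that unfolding S_def by simp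
  have u_nth: "rshift b s ! j = S (n - b + j)" if "j < n" for j
    using nth_rshift[OF s_facts(1)] that \<open>b < n\<close> unfolding S_def by simp
  interpret rotated_window S n c D p "n - b"
  proof
    show "S (i + n) = S i" for i
      unfolding S_def by simp
    show "0 < p" "p \<le> D"
      using u_facts(2,4) n_eq by simp_all
    show "has_period S (n - 1) D"
      using B_set_has_period[OF s] has_period_cong[of "n - 1" S "nth s"] S_nth n_eq by simp
    show "S (n - 1) \<noteq> S (n - 1 - D)"
      using B_set_nth_break[OF s] S_nth n_eq \<open>D < c\<close> by simp
    show "has_period (\<lambda>j. S (n - b + j)) (c + p - 1) p"
      using B_set_has_period[OF u] u_nth u_facts(4) n_eq
        has_period_cong[of "c + p - 1" "\<lambda>j. S (n - b + j)" "nth (rshift b s)"] by simp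
    show "S (n - b + c + p - 1) \<noteq> S (n - b + c - 1)"
      using B_set_nth_break[OF u] u_nth[of "c + p - 1"] u_nth[of "c - 1"] u_facts(2,4) n_eq
        \<open>D < c\<close> by (simp add: add.assoc)
    show "g = D" if "0 < g" "g dvd D" "has_period S D g" for g
      using aperiodic_take_dvd_period_eq[OF s_facts(6) _ _ that(1,2)] that(3)
        has_period_cong[of D S "nth s"] S_nth s_facts(1,2) n_eq by simp
  qed (use assms in simp_all)
  show ?thesis
    using a_plus_p_eq_n \<open>b < n\<close> by simp
qed

theorem corollary1:
  fixes n c d1 d2 b t1 t2 :: nat and s :: "bool list"
  assumes "int c \<ge> \<lceil>(2 * real n - 1) / 3\<rceil>"
    and "d1 = n - c"
    and "s \<in> B_set n c d1"
    and "is_add n d1 s t1"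
    and "0 < b" and "b < n"
    and "rshift b s \<in> B_set n c d2"
    and "is_add n d2 (rshift b s) t2"
    and "t2 \<ge> t1"
  shows "b = d2"
proof -
  have "2 * n \<le> 3 * c + 1"
    using assms(1) by (simp add: ceiling_le_iff)
  have d1: "1 \<le> d1" "d1 \<le> n div 2" and d2: "1 \<le> d2" "d2 \<le> n div 2"
    using B_setD(2,5)[OF assms(3)] B_setD(2,5)[OF assms(7)] by simp_all
  show ?thesis
  proof (cases "d1 < c")
    case True
    have "n = c + d1"
      using assms(2) d1(1) by simp
    then show ?thesis
      using rshift_in_B_set_eq[OF assms(3,7)] True assms(5,6) \<open>2 * n \<le> 3 * c + 1\<close> by simp
  next
    case False
    \<comment> \<open>Then \<open>n = 2\<close> and \<open>b = d1 = d2 = 1\<close>.\<close>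
    have "2 * (n div 2) \<le> n"
      by simp
    then show ?thesis
      using False assms(2,5,6) d1 d2 \<open>2 * n \<le> 3 * c + 1\<close> by linarith
  qed
qed

end
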